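(* In the FJ-FA system (defined in the context) with Poisson arrival rate $\lambda < (t+1)\mu$, the steady-state download time satisfies $\Pr\{T_{\text{FJ-FA}} > x\} \ge \exp\!\big(-((t+1)\mu - \lambda)x\big)$ for all $x \ge 0$.
   Context: Storage model: objects are encoded by a systematic linear code with $(r,t)$-availability: each systematic server has $t$ pairwise disjoint recovery groups of $r$ servers from any one of which its object can be recovered. FJ-FA system: requests arrive as a Poisson process of rate $\lambda$ and every request asks for the same object; each request is replicated into one copy at the object's systematic server and one copy at each of its $t$ recovery groups; a recovery-group copy is forked into $r$ sub-copies (one per server of the group) and completes when all finish; the request completes when its systematic copy finishes or some recovery-group copy completes, and then all its outstanding copies/sub-copies are removed immediately. Each server has a FCFS queue and serves one sub-copy at a time; service times are independent, each $\mathrm{Exp}(\mu)$. Download time is departure minus arrival time, in steady state. *)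

theory Defs
  imports "HOL-Probability.Probability"
begin

(* Servers: None = the systematic server; Some (g,j) = j-th server (1..r) of
   recovery group g (1..t).  A request in the system is represented by the set
   of its recovery-group sub-copies (g,j) that have already finished.
   A system state is the list of requests present, oldest first (FCFS). *)

type_synonym req = "(nat \<times> nat) set"
type_synonym state = "req list"
type_synonym server = "(nat \<times> nat) option"

definition grid :: "nat \<Rightarrow> nat \<Rightarrow> (nat \<times> nat) set" where
  "grid t r = {1..t} \<times> {1..r}"

definition servers :: "nat \<Rightarrow> nat \<Rightarrow> server set" where
  "servers t r = insert None (Some ` grid t r)"

definition group_done :: "nat \<Rightarrow> nat \<Rightarrow> req \<Rightarrow> bool" where
  "group_done r g y \<longleftrightarrow> {g} \<times> {1..r} \<subseteq> y"

definition valid_req :: "nat \<Rightarrow> nat \<Rightarrow> req \<Rightarrow> bool" where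
  "valid_req t r y \<longleftrightarrow> y \<subseteq> grid t r \<and> (\<forall>g\<in>{1..t}. \<not> group_done r g y)"

definition valid_states :: "nat \<Rightarrow> nat \<Rightarrow> state set" where
  "valid_states t r = {xs. \<forall>y\<in>set xs. valid_req t r y}"

definition first_waiting :: "nat \<times> nat \<Rightarrow> state \<Rightarrow> nat option" where
  "first_waiting p xs =
     (if \<exists>i<length xs. p \<notin> xs ! i
      then Some (LEAST i. i < length xs \<and> p \<notin> xs ! i) else None)"

definition departs :: "nat \<Rightarrow> server \<Rightarrow> state \<Rightarrow> nat option" where
  "departs r v xs =
     (case v of
        None \<Rightarrow> (if xs = [] then None else Some 0)
      | Some p \<Rightarrow> (case first_waiting p xs of
                     None \<Rightarrow> None
                   | Some i \<Rightarrow> (if group_done r (fst p) (insert p (xs ! i))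
                                then Some i else None)))"

definition serve :: "nat \<Rightarrow> server \<Rightarrow> state \<Rightarrow> state" where
  "serve r v xs =
     (case v of
        None \<Rightarrow> (if xs = [] then [] else tl xs)
      | Some p \<Rightarrow> (case first_waiting p xs of
                     None \<Rightarrow> xs
                   | Some i \<Rightarrow> (let y = insert p (xs ! i) in
                                if group_done r (fst p) y
                                then take i xs @ drop (Suc i) xs
                                else xs[i := y])))"

(* Uniformised jump kernel of the full FJ-FA CTMC: total event rate
   lam + (1 + t*r)*mu; arrival w.p. lam/total, otherwise a uniformly chosen
   server (each with rate mu) completes a service (self-loop if idle). *)
definition full_step :: "real \<Rightarrow> real \<Rightarrow> nat \<Rightarrow> nat \<Rightarrow> state \<Rightarrow> state pmf" where
  "full_step lam mu t r xs =
     bind_pmf (bernoulli_pmf (lam / (lam + mu * real (1 + t * r))))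
       (\<lambda>a. if a then return_pmf (xs @ [{}])
            else map_pmf (\<lambda>v. serve r v xs) (pmf_of_set (servers t r)))"

(* stationary (steady-state) distribution: global balance pi Q = 0,
   equivalently invariance under the uniformised kernel *)
definition stationary :: "real \<Rightarrow> real \<Rightarrow> nat \<Rightarrow> nat \<Rightarrow> state pmf \<Rightarrow> bool" where
  "stationary lam mu t r \<pi> \<longleftrightarrow> bind_pmf \<pi> (full_step lam mu t r) = \<pi>"

(* Tagged request: it is the last element of the list; requests arriving after
   it never affect it (FCFS everywhere), so they are omitted.  None = the
   tagged request has departed (absorbing). *)
definition tag_step :: "nat \<Rightarrow> server \<Rightarrow> state option \<Rightarrow> state option" where
  "tag_step r v s =
     (case s of
        None \<Rightarrow> None
      | Some xs \<Rightarrow> (if departs r v xs = Some (length xs - 1) then None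
                    else Some (serve r v xs)))"

definition tag_kernel :: "nat \<Rightarrow> nat \<Rightarrow> state option \<Rightarrow> state option pmf" where
  "tag_kernel t r s = map_pmf (\<lambda>v. tag_step r v s) (pmf_of_set (servers t r))"

definition tag_iter :: "nat \<Rightarrow> nat \<Rightarrow> nat \<Rightarrow> state option \<Rightarrow> state option pmf" where
  "tag_iter t r k s = ((\<lambda>p. bind_pmf p (tag_kernel t r)) ^^ k) (return_pmf s)"

(* P{T > x} for a request that finds the system in state xs on arrival,
   computed by uniformisation at rate (1 + t*r)*mu *)
definition tag_survival :: "real \<Rightarrow> nat \<Rightarrow> nat \<Rightarrow> state \<Rightarrow> real \<Rightarrow> real" where
  "tag_survival mu t r xs x =
     (let L = mu * real (1 + t * r) in
      \<Sum>k. exp (- L * x) * (L * x) ^ k / fact k *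
           measure_pmf.prob (tag_iter t r k (Some (xs @ [{}]))) (range Some))"

(* steady-state download time tail: by PASTA an arrival sees the stationary law *)
definition download_tail :: "real \<Rightarrow> nat \<Rightarrow> nat \<Rightarrow> state pmf \<Rightarrow> real \<Rightarrow> real" where
  "download_tail mu t r \<pi> x = measure_pmf.expectation \<pi> (\<lambda>xs. tag_survival mu t r xs x)"

end

theory Submission
  imports Defs
begin

text \<open>
  Under FCFS every server finishes the sub-copies of older requests first, so the sets of
  finished sub-copies are nested: an older request has finished everything a younger one has.
  The stationary law lives on nested states, since the systematic server lowers the nesting
  defect at rate \<mu> and no transition raises it. In a nested state at most t + 1 servers (the
  systematic one and one per recovery group) can complete a request. Hence the balance across
  the cut between n and n + 1 requests gives \<lambda> P{N = n} \<le> (t + 1)\<mu> P{N = n + 1}; and after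
  uniformisation at rate (1 + t r)\<mu> the tagged request, which arrives as number N + 1,
  survives at least as long as a walk from N + 1 that steps down with probability
  q = (t + 1)/(1 + t r). Averaging this walk over N gives survival at least (1 - q (1 - \<rho>))^k
  after k steps, with \<rho> = \<lambda>/((t + 1)\<mu>), and the Poisson mixture over the number of steps
  in time x gives exp(-((t + 1)\<mu> - \<lambda>) x).
\<close>

section \<open>Nested states\<close>

definition nested :: "state \<Rightarrow> bool" where
  "nested xs \<longleftrightarrow> sorted_wrt (\<lambda>a b. b \<subseteq> a) xs"

lemma nested_nth: "nested xs \<Longrightarrow> i < j \<Longrightarrow> j < length xs \<Longrightarrow> xs ! j \<subseteq> xs ! i"
  unfolding nested_def by (simp add: sorted_wrt_iff_nth_less)

lemma nested_nth_le: "nested xs \<Longrightarrow> i \<le> j \<Longrightarrow> j < length xs \<Longrightarrow> xs ! j \<subseteq> xs ! i"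
  using nested_nth[of xs i j] by (cases "i = j") auto

lemma nested_snoc_empty: "nested xs \<Longrightarrow> nested (xs @ [{}])"
  unfolding nested_def by (simp add: sorted_wrt_append)

lemma nested_drop: "nested xs \<Longrightarrow> nested (drop k xs)"
  unfolding nested_def by (simp add: sorted_wrt_drop)

lemma nested_tl: "nested xs \<Longrightarrow> nested (tl xs)"
  using nested_drop[of xs 1] by (simp add: drop_Suc)

lemma nested_remove_nth:
  assumes "nested xs"
  shows "nested (take i xs @ drop (Suc i) xs)"
proof -
  have "sorted_wrt (\<lambda>a b. b \<subseteq> a) (take i xs @ drop i xs)"
    using assms unfolding nested_def by simp
  moreover have "set (drop (Suc i) xs) \<subseteq> set (drop i xs)"
    by (simp add: set_drop_subset_set_drop)
  ultimately show ?thesis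
    using assms unfolding nested_def sorted_wrt_append by (auto simp: sorted_wrt_drop)
qed

lemma nested_update_insert:
  assumes "nested xs" "i < length xs" "\<And>j. j < i \<Longrightarrow> p \<in> xs ! j"
  shows "nested (xs[i := insert p (xs ! i)])"
  unfolding nested_def sorted_wrt_iff_nth_less
proof (intro allI impI)
  fix a b assume "a < b" "b < length (xs[i := insert p (xs ! i)])"
  then show "xs[i := insert p (xs ! i)] ! b \<subseteq> xs[i := insert p (xs ! i)] ! a"
    using assms nested_nth[OF assms(1), of a b] nested_nth[OF assms(1), of a i]
    by (auto simp: nth_list_update)
qed

lemma first_waiting_SomeD:
  assumes "first_waiting p xs = Some i"
  shows "i < length xs" "p \<notin> xs ! i" "\<And>j. j < i \<Longrightarrow> p \<in> xs ! j"
proof -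
  have ex: "\<exists>i<length xs. p \<notin> xs ! i" and i: "i = (LEAST i. i < length xs \<and> p \<notin> xs ! i)"
    using assms unfolding first_waiting_def by (auto split: if_splits)
  then show "i < length xs" "p \<notin> xs ! i"
    by (metis (mono_tags, lifting) LeastI)+
  show "p \<in> xs ! j" if "j < i" for j
    using not_less_Least[of j "\<lambda>i. i < length xs \<and> p \<notin> xs ! i"] i that \<open>i < length xs\<close>
    by auto
qed

lemma departs_SomeD:
  assumes "departs r (Some p) xs = Some i"
  shows "first_waiting p xs = Some i" "group_done r (fst p) (insert p (xs ! i))"
  using assms unfolding departs_def by (auto split: option.splits if_splits)

lemma departs_less_length: "departs r v xs = Some i \<Longrightarrow> i < length xs"
  unfolding departs_def by (auto dest: first_waiting_SomeD split: option.splits if_splits)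

lemma length_serve:
  "length (serve r v xs) = length xs - (if departs r v xs = None then 0 else 1)"
  unfolding serve_def departs_def
  by (auto simp: Let_def min_def dest: first_waiting_SomeD split: option.splits)

lemma serve_Some:
  "serve r (Some p) xs =
     (case first_waiting p xs of
        None \<Rightarrow> xs
      | Some i \<Rightarrow> (if group_done r (fst p) (insert p (xs ! i))
                   then take i xs @ drop (Suc i) xs else xs[i := insert p (xs ! i)]))"
  by (cases "first_waiting p xs") (simp_all add: serve_def Let_def)

lemma nested_serve: "nested xs \<Longrightarrow> nested (serve r v xs)"
  unfolding serve_def
  by (auto simp: Let_def nested_tl nested_remove_nth intro!: nested_update_insert
      dest: first_waiting_SomeD split: option.splits)

definition nesting_defect :: "state \<Rightarrow> nat" where
  "nesting_defect xs = (LEAST k. nested (drop k xs))"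

lemma nested_drop_nesting_defect: "nested (drop (nesting_defect xs) xs)"
  unfolding nesting_defect_def by (rule LeastI[of _ "length xs"]) (simp add: nested_def)

lemma nesting_defect_le: "nested (drop k xs) \<Longrightarrow> nesting_defect xs \<le> k"
  unfolding nesting_defect_def by (rule Least_le)

lemma nesting_defect_le_length: "nesting_defect xs \<le> length xs"
  by (rule nesting_defect_le) (simp add: nested_def)

lemma nesting_defect_eq_0_iff: "nesting_defect xs = 0 \<longleftrightarrow> nested xs"
  using nested_drop_nesting_defect[of xs] nesting_defect_le[of 0 xs] by auto

lemma nesting_defect_snoc_empty: "nesting_defect (xs @ [{}]) \<le> nesting_defect xs"
  using nested_drop_nesting_defect[of xs] nesting_defect_le_length[of xs]
  by (intro nesting_defect_le) (simp add: nested_snoc_empty)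

lemma nesting_defect_tl: "nesting_defect (tl xs) \<le> nesting_defect xs - 1"
proof (cases "nesting_defect xs")
  case 0
  then have "nesting_defect (tl xs) = 0"
    by (simp add: nesting_defect_eq_0_iff nested_tl)
  then show ?thesis by simp
next
  case (Suc k)
  then have "drop k (tl xs) = drop (nesting_defect xs) xs"
    by (simp add: drop_Suc)
  then show ?thesis
    using Suc nested_drop_nesting_defect[of xs] nesting_defect_le[of k "tl xs"] by simp
qed

lemma nesting_defect_remove_nth:
  assumes "i < length xs"
  shows "nesting_defect (take i xs @ drop (Suc i) xs) \<le> nesting_defect xs"
proof (cases "i < nesting_defect xs")
  case True
  then have "drop (nesting_defect xs - 1) (take i xs @ drop (Suc i) xs)
      = drop (nesting_defect xs) xs"
    using assms by (simp add: min_def)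
  then have "nesting_defect (take i xs @ drop (Suc i) xs) \<le> nesting_defect xs - 1"
    using nested_drop_nesting_defect[of xs] by (intro nesting_defect_le) simp
  then show ?thesis by simp
next
  case False
  define k where "k = nesting_defect xs"
  have "drop k (take i xs @ drop (Suc i) xs)
      = take (i - k) (drop k xs) @ drop (Suc (i - k)) (drop k xs)"
    using False assms by (simp add: k_def min_def Suc_diff_le drop_take)
  then have "nested (drop k (take i xs @ drop (Suc i) xs))"
    using nested_remove_nth[OF nested_drop_nesting_defect] by (simp add: k_def)
  then show ?thesis
    unfolding k_def by (rule nesting_defect_le)
qed

lemma nesting_defect_update_first_waiting:
  assumes "first_waiting p xs = Some i"
  shows "nesting_defect (xs[i := insert p (xs ! i)]) \<le> nesting_defect xs"
proof (cases "i < nesting_defect xs")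
  case True
  then show ?thesis
    using nested_drop_nesting_defect[of xs] by (intro nesting_defect_le) simp
next
  case False
  define k where "k = nesting_defect xs"
  note fw = first_waiting_SomeD[OF assms]
  have "drop k (xs[i := insert p (xs ! i)]) = (drop k xs)[i - k := insert p (drop k xs ! (i - k))]"
    using False fw(1) by (simp add: k_def drop_update_swap)
  moreover have "nested ((drop k xs)[i - k := insert p (drop k xs ! (i - k))])"
    using False fw unfolding k_def by (intro nested_update_insert nested_drop_nesting_defect) auto
  ultimately show ?thesis
    unfolding k_def by (metis nesting_defect_le)
qed

lemma nesting_defect_serve: "nesting_defect (serve r v xs) \<le> nesting_defect xs"
proof (cases v)
  case None
  then show ?thesis
    by (auto simp: serve_def intro: le_trans[OF nesting_defect_tl])
next
  case (Some p)
  then show ?thesis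
    by (cases "first_waiting p xs")
      (auto simp: serve_Some intro: nesting_defect_remove_nth nesting_defect_update_first_waiting
        dest: first_waiting_SomeD)
qed

lemma nesting_defect_serve_systematic:
  "nesting_defect xs \<noteq> 0 \<Longrightarrow> nesting_defect (serve r None xs) < nesting_defect xs"
  using nesting_defect_tl[of xs] nesting_defect_le_length[of xs] by (auto simp: serve_def)

section \<open>Departures from a nested state\<close>

lemma finite_servers: "finite (servers t r)"
  unfolding servers_def grid_def by simp

lemma None_in_servers: "None \<in> servers t r"
  unfolding servers_def by simp

lemma servers_not_empty: "servers t r \<noteq> {}"
  using None_in_servers by blast

lemma card_servers: "card (servers t r) = 1 + t * r"
  unfolding servers_def grid_def by (simp add: card_image card_cartesian_product)

lemma valid_states_snoc_empty:
  "r \<ge> 1 \<Longrightarrow> xs \<in> valid_states t r \<Longrightarrow> xs @ [{}] \<in> valid_states t r"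
  unfolding valid_states_def valid_req_def group_done_def by auto

lemma valid_req_insert:
  assumes "valid_req t r y" "p \<in> grid t r" "\<not> group_done r (fst p) (insert p y)"
  shows "valid_req t r (insert p y)"
proof -
  have "group_done r g y" if "group_done r g (insert p y)" "g \<noteq> fst p" for g
    using that unfolding group_done_def by auto
  then show ?thesis
    using assms unfolding valid_req_def by auto
qed

lemma valid_states_serve:
  assumes "v \<in> servers t r" and valid: "xs \<in> valid_states t r"
  shows "serve r v xs \<in> valid_states t r"
proof (cases v)
  case None
  then show ?thesis
    using valid unfolding valid_states_def serve_def by (auto dest: list.set_sel(2))
next
  case (Some p)
  have p: "p \<in> grid t r"
    using assms(1) Some unfolding servers_def by auto
  show ?thesis
  proof (cases "first_waiting p xs")
    case None
    then show ?thesis using valid Some by (simp add: serve_Some)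
  next
    case (Some i)
    have "valid_req t r (xs ! i)"
      using valid first_waiting_SomeD(1)[OF Some] unfolding valid_states_def by simp
    then have "valid_req t r (insert p (xs ! i))" if "\<not> group_done r (fst p) (insert p (xs ! i))"
      using p that by (rule valid_req_insert)
    then show ?thesis
      using valid \<open>v = Some p\<close> Some set_update_subset_insert[of xs i]
      unfolding valid_states_def
      by (auto simp: serve_Some dest: in_set_takeD in_set_dropD)
  qed
qed

lemma group_done_insertD:
  assumes "group_done r g (insert p y)" "j \<in> {1..r}" "(g, j) \<noteq> p"
  shows "(g, j) \<in> y"
proof -
  have "(g, j) \<in> {g} \<times> {1..r}"
    using assms(2) by simp
  then show ?thesis
    using assms(1,3) unfolding group_done_def by (metis insertE subsetD)
qed

lemma departs_same_group:
  assumes "nested xs"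
    and d1: "departs r (Some (g, j1)) xs = Some i1" and d2: "departs r (Some (g, j2)) xs = Some i2"
    and "j1 \<in> {1..r}" "j2 \<in> {1..r}"
  shows "j1 = j2"
proof (rule ccontr)
  assume "j1 \<noteq> j2"
  note fw1 = first_waiting_SomeD[OF departs_SomeD(1)[OF d1]]
  note fw2 = first_waiting_SomeD[OF departs_SomeD(1)[OF d2]]
  have in1: "(g, j2) \<in> xs ! i1"
    using group_done_insertD[OF departs_SomeD(2)[OF d1]] \<open>j1 \<noteq> j2\<close> \<open>j2 \<in> {1..r}\<close> by simp
  have in2: "(g, j1) \<in> xs ! i2"
    using group_done_insertD[OF departs_SomeD(2)[OF d2]] \<open>j1 \<noteq> j2\<close> \<open>j1 \<in> {1..r}\<close> by simp
  show False
  proof (cases "i1 \<le> i2")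
    case True
    then show False using nested_nth_le[OF assms(1) True fw2(1)] in2 fw1(2) by auto
  next
    case False
    then show False using nested_nth_le[OF assms(1) _ fw1(1), of i2] in1 fw2(2) by auto
  qed
qed

lemma card_departing_servers_le:
  assumes "nested xs"
  shows "card {v \<in> servers t r. departs r v xs \<noteq> None} \<le> t + 1"
proof -
  define P where "P = {p \<in> grid t r. departs r (Some p) xs \<noteq> None}"
  have "finite P"
    unfolding P_def grid_def by simp
  have "inj_on fst P"
  proof (rule inj_onI)
    fix p p' assume "p \<in> P" "p' \<in> P" "fst p = fst p'"
    then obtain g j j' i i' where "p = (g, j)" "p' = (g, j')" "j \<in> {1..r}" "j' \<in> {1..r}"
      "departs r (Some (g, j)) xs = Some i" "departs r (Some (g, j')) xs = Some i'"
      unfolding P_def grid_def by (cases p, cases p') auto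
    then show "p = p'"
      using departs_same_group[OF assms, of r g j i j' i'] by simp
  qed
  moreover have "fst ` P \<subseteq> {1..t}"
    unfolding P_def grid_def by auto
  ultimately have "card P \<le> t"
    using card_mono[of "{1..t}" "fst ` P"] card_image[of fst P] by simp
  have "card {v \<in> servers t r. departs r v xs \<noteq> None} \<le> card (insert None (Some ` P))"
    unfolding servers_def P_def using \<open>finite P\<close> by (intro card_mono) (auto simp: P_def)
  also have "\<dots> = Suc (card P)"
    using \<open>finite P\<close> by (simp add: card_image)
  finally show ?thesis
    using \<open>card P \<le> t\<close> by simp
qed

lemma departs_last_nested:
  assumes "nested xs" and valid: "xs \<in> valid_states t r" and "v \<in> servers t r"
    and last: "departs r v xs = Some (length xs - 1)"
  shows "length xs = 1"
proof (rule ccontr)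
  assume "length xs \<noteq> 1"
  then have len: "length xs \<ge> 2"
    using departs_less_length[OF last] by linarith
  show False
  proof (cases v)
    case None
    then show False using last len by (auto simp: departs_def split: if_splits)
  next
    case (Some p)
    have fw: "first_waiting p xs = Some (length xs - 1)"
      and completes: "group_done r (fst p) (insert p (xs ! (length xs - 1)))"
      using departs_SomeD last Some by auto
    have "p \<in> xs ! 0"
      using first_waiting_SomeD(3)[OF fw, of 0] len by simp
    moreover have "xs ! (length xs - 1) \<subseteq> xs ! 0"
      using nested_nth[OF assms(1), of 0 "length xs - 1"] len by simp
    ultimately have "insert p (xs ! (length xs - 1)) \<subseteq> xs ! 0"
      by simp
    then have "group_done r (fst p) (xs ! 0)"
      using completes unfolding group_done_def by (rule subset_trans[rotated])
    moreover have "valid_req t r (xs ! 0)"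
      using valid nth_mem[of 0 xs] len unfolding valid_states_def by fastforce
    moreover have "fst p \<in> {1..t}"
      using \<open>v \<in> servers t r\<close> Some unfolding servers_def grid_def by auto
    ultimately show False
      unfolding valid_req_def by simp
  qed
qed

lemma tag_step_nested:
  assumes "nested xs" "xs \<in> valid_states t r" "v \<in> servers t r" "xs \<noteq> []"
  shows "tag_step r v (Some xs) = (if serve r v xs = [] then None else Some (serve r v xs))"
proof -
  have "departs r v xs = Some (length xs - 1) \<longleftrightarrow> serve r v xs = []"
  proof
    assume "departs r v xs = Some (length xs - 1)"
    then show "serve r v xs = []"
      using departs_last_nested[OF assms(1-3)] length_serve[of r v xs] by auto
  next
    assume "serve r v xs = []"
    then show "departs r v xs = Some (length xs - 1)"
      using length_serve[of r v xs] \<open>xs \<noteq> []\<close> departs_less_length[of r v xs]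
      by (cases "departs r v xs") (auto split: if_splits)
  qed
  then show ?thesis
    by (simp add: tag_step_def)
qed

section \<open>The stationary distribution\<close>

lemma prob_bind_pmf:
  "measure_pmf.prob (bind_pmf M N) A = measure_pmf.expectation M (\<lambda>x. measure_pmf.prob (N x) A)"
  unfolding measure_pmf_bind
  by (rule measure_pmf.measure_bind[where N="count_space UNIV"])
    (auto simp: space_subprob_algebra measure_pmf.subprob_space_axioms)

lemma prob_full_step:
  assumes "lam > 0" "mu > 0"
  shows "measure_pmf.prob (full_step lam mu t r xs) A =
    (lam * indicator A (xs @ [{}]) + mu * real (card {v \<in> servers t r. serve r v xs \<in> A}))
      / (lam + mu * real (1 + t * r))"
proof -
  define D where "D = lam + mu * real (1 + t * r)"
  define C where "C = {v \<in> servers t r. serve r v xs \<in> A}"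
  have "D > 0" "lam \<le> D"
    using assms by (simp_all add: D_def add_pos_nonneg)
  then have "0 \<le> lam / D" "lam / D \<le> 1"
    using assms by simp_all
  moreover have "measure_pmf.prob (map_pmf (\<lambda>v. serve r v xs) (pmf_of_set (servers t r))) A
      = real (card C) / real (1 + t * r)"
    by (simp add: measure_pmf_of_set[OF servers_not_empty finite_servers] vimage_def Int_def
        card_servers C_def)
  ultimately have "measure_pmf.prob (full_step lam mu t r xs) A
      = lam / D * indicator A (xs @ [{}]) + (1 - lam / D) * (real (card C) / real (1 + t * r))"
    unfolding full_step_def prob_bind_pmf D_def[symmetric]
    by (simp add: integral_bernoulli_pmf) (simp add: algebra_simps)
  also have "1 - lam / D = mu * real (1 + t * r) / D"
    using \<open>D > 0\<close> by (simp add: D_def field_simps)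
  also have "lam / D * indicator A (xs @ [{}])
        + mu * real (1 + t * r) / D * (real (card C) / real (1 + t * r))
      = (lam * indicator A (xs @ [{}]) + mu * real (card C)) / D"
    using add_pos_nonneg[of 1 "real t * real r"] by (simp add: add_divide_distrib)
  finally show ?thesis
    unfolding C_def D_def .
qed

lemma stationary_prob_le:
  assumes "stationary lam mu t r \<pi>"
    and "\<And>s. s \<in> set_pmf \<pi> \<Longrightarrow> measure_pmf.prob (full_step lam mu t r s) A \<le> f s"
    and "integrable (measure_pmf \<pi>) f"
  shows "measure_pmf.prob \<pi> A \<le> measure_pmf.expectation \<pi> f"
proof -
  have "measure_pmf.prob \<pi> A
      = measure_pmf.expectation \<pi> (\<lambda>s. measure_pmf.prob (full_step lam mu t r s) A)"
    using assms(1) prob_bind_pmf unfolding stationary_def by metis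
  also have "\<dots> \<le> measure_pmf.expectation \<pi> f"
  proof (rule integral_mono_AE)
    show "integrable (measure_pmf \<pi>) (\<lambda>s. measure_pmf.prob (full_step lam mu t r s) A)"
      by (rule measure_pmf.integrable_const_bound[where B=1]) auto
  qed (use assms(2,3) in \<open>auto intro: AE_pmfI\<close>)
  finally show ?thesis .
qed

lemma prob_full_step_le:
  assumes "lam > 0" "mu > 0" "card {v \<in> servers t r. serve r v s \<in> A} \<le> c"
  shows "measure_pmf.prob (full_step lam mu t r s) A
    \<le> (lam * indicator A (s @ [{}]) + mu * real c) / (lam + mu * real (1 + t * r))"
proof -
  have "real (card {v \<in> servers t r. serve r v s \<in> A}) \<le> real c"
    using assms(3) by (simp only: of_nat_le_iff)
  then show ?thesis
    unfolding prob_full_step[OF assms(1,2)] using assms(1,2)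
    by (intro divide_right_mono add_left_mono mult_left_mono) (auto intro: add_pos_nonneg)
qed

lemma prob_full_step_nesting_defect:
  assumes "lam > 0" "mu > 0" "k \<ge> 1"
  shows "measure_pmf.prob (full_step lam mu t r s) {s. k \<le> nesting_defect s}
    \<le> indicator {s. Suc k \<le> nesting_defect s} s
      + (1 - mu / (lam + mu * real (1 + t * r))) * indicator {s. nesting_defect s = k} s"
proof -
  define D where "D = lam + mu * real (1 + t * r)"
  define C where "C = {v \<in> servers t r. serve r v s \<in> {s. k \<le> nesting_defect s}}"
  note prob_le = prob_full_step_le[OF assms(1,2), of t r s "{s. k \<le> nesting_defect s}",
      folded C_def D_def]
  consider "nesting_defect s < k" | "nesting_defect s = k" | "Suc k \<le> nesting_defect s"
    by linarith
  then show ?thesis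
  proof cases
    case 1
    then have "\<not> k \<le> nesting_defect (serve r v s)" for v
      using nesting_defect_serve[of r v s] by linarith
    then have "C = {}"
      unfolding C_def by simp
    moreover have "s @ [{}] \<notin> {s. k \<le> nesting_defect s}"
      using 1 nesting_defect_snoc_empty[of s] by simp
    ultimately show ?thesis
      using 1 prob_le[of 0] by simp
  next
    case 2
    have "None \<notin> C"
      using 2 assms(3) nesting_defect_serve_systematic[of s r] unfolding C_def by auto
    then have "card C \<le> card (servers t r - {None})"
      unfolding C_def by (intro card_mono) (auto simp: finite_servers)
    also have "\<dots> = t * r"
      using card_Diff_singleton[OF None_in_servers] by (simp add: card_servers)
    finally have "measure_pmf.prob (full_step lam mu t r s) {s. k \<le> nesting_defect s}
        \<le> (lam * indicator {s. k \<le> nesting_defect s} (s @ [{}]) + mu * real (t * r)) / D"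
      by (rule prob_le)
    also have "\<dots> \<le> (lam + mu * real (t * r)) / D"
      using assms(1,2) by (intro divide_right_mono add_right_mono)
        (auto simp: D_def indicator_def intro: add_pos_nonneg)
    also have "\<dots> = 1 - mu / D"
      using assms(1,2) add_pos_nonneg[of lam "mu * real (1 + t * r)"]
      by (simp add: D_def field_simps)
    finally show ?thesis
      using 2 by (simp add: D_def)
  next
    case 3
    then show ?thesis
      using measure_pmf.prob_le_1 by simp
  qed
qed

lemma stationary_prob_nesting_defect:
  assumes "lam > 0" "mu > 0" and stat: "stationary lam mu t r \<pi>" and "k \<ge> 1"
  shows "measure_pmf.prob \<pi> {s. nesting_defect s = k} = 0"
proof -
  define D where "D = lam + mu * real (1 + t * r)"
  define A where "A = {s. k \<le> nesting_defect s}"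
  define A' where "A' = {s. Suc k \<le> nesting_defect s}"
  define E where "E = {s. nesting_defect s = k}"
  have "mu / D > 0"
    using assms(1,2) by (simp add: D_def add_pos_nonneg)
  have "A = A' \<union> E" "A' \<inter> E = {}"
    unfolding A_def A'_def E_def by auto
  then have split: "measure_pmf.prob \<pi> A = measure_pmf.prob \<pi> A' + measure_pmf.prob \<pi> E"
    by (simp add: measure_pmf.finite_measure_Union)
  have "measure_pmf.prob \<pi> A
      \<le> measure_pmf.expectation \<pi> (\<lambda>s. indicator A' s + (1 - mu / D) * indicator E s)"
    using prob_full_step_nesting_defect[OF assms(1,2,4)] unfolding A_def A'_def E_def D_def
    by (intro stationary_prob_le[OF stat] integrable_add integrable_mult_right
        integrable_real_indicator) (simp_all add: measure_pmf.emeasure_eq_measure)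
  also have "\<dots> = measure_pmf.prob \<pi> A' + (1 - mu / D) * measure_pmf.prob \<pi> E"
    by (subst Bochner_Integration.integral_add)
      (auto simp: integrable_indicator_iff measure_pmf.emeasure_eq_measure)
  finally have "mu / D * measure_pmf.prob \<pi> E \<le> 0"
    unfolding split by (simp add: algebra_simps)
  then have "measure_pmf.prob \<pi> E \<le> 0"
    using \<open>mu / D > 0\<close> by (metis not_le mult_pos_pos)
  then show ?thesis
    using measure_nonneg[of "measure_pmf \<pi>" E] unfolding E_def by linarith
qed

lemma stationary_nested:
  assumes "lam > 0" "mu > 0" "stationary lam mu t r \<pi>" "s \<in> set_pmf \<pi>"
  shows "nested s"
proof (rule ccontr)
  assume "\<not> nested s"
  then have "nesting_defect s \<ge> 1"
    using nesting_defect_eq_0_iff[of s] by linarith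
  have "pmf \<pi> s \<le> measure_pmf.prob \<pi> {s'. nesting_defect s' = nesting_defect s}"
    by (simp add: measure_pmf_single[symmetric] measure_pmf.finite_measure_mono)
  then show False
    using stationary_prob_nesting_defect[OF assms(1-3) \<open>nesting_defect s \<ge> 1\<close>]
      \<open>s \<in> set_pmf \<pi>\<close> pmf_positive[of s \<pi>]
    by simp
qed

lemma prob_full_step_length:
  fixes t r :: nat
  assumes "lam > 0" "mu > 0" "nested s"
  defines "D \<equiv> lam + mu * real (1 + t * r)"
  shows "measure_pmf.prob (full_step lam mu t r s) {s. length s \<le> n}
    \<le> indicator {s. length s < n} s + mu * real (1 + t * r) / D * indicator {s. length s = n} s
      + mu * real (t + 1) / D * indicator {s. length s = Suc n} s"
proof -
  define C where "C = {v \<in> servers t r. serve r v s \<in> {s. length s \<le> n}}"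
  note prob_le = prob_full_step_le[OF assms(1,2), of t r s "{s. length s \<le> n}",
      folded C_def D_def]
  consider "length s < n" | "length s = n" | "length s = Suc n" | "length s \<ge> Suc (Suc n)"
    by linarith
  then show ?thesis
  proof cases
    case 1
    then show ?thesis
      using measure_pmf.prob_le_1 by simp
  next
    case 2
    have "card C \<le> 1 + t * r"
      using card_mono[OF finite_servers, of C t r] unfolding C_def card_servers by auto
    then show ?thesis
      using 2 prob_le[OF \<open>card C \<le> 1 + t * r\<close>] by (simp del: of_nat_add of_nat_mult)
  next
    case 3
    have "C \<subseteq> {v \<in> servers t r. departs r v s \<noteq> None}"
      using 3 unfolding C_def by (auto simp: length_serve split: if_splits)
    then have "card C \<le> card {v \<in> servers t r. departs r v s \<noteq> None}"
      by (rule card_mono[rotated]) (simp add: finite_servers)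
    also have "\<dots> \<le> t + 1"
      by (rule card_departing_servers_le[OF assms(3)])
    finally show ?thesis
      using 3 prob_le[of "t + 1"] by (simp del: of_nat_add)
  next
    case 4
    then have "C = {}"
      unfolding C_def by (auto simp: length_serve)
    then show ?thesis
      using 4 prob_le[of 0] by simp
  qed
qed

lemma stationary_length_balance:
  assumes "lam > 0" "mu > 0" and stat: "stationary lam mu t r \<pi>"
  shows "lam * measure_pmf.prob \<pi> {s. length s = n}
    \<le> mu * real (t + 1) * measure_pmf.prob \<pi> {s. length s = Suc n}"
proof -
  define D where "D = lam + mu * real (1 + t * r)"
  define L where "L = {s::state. length s \<le> n}"
  define L' where "L' = {s::state. length s < n}"
  define E where "E = {s::state. length s = n}"
  define E' where "E' = {s::state. length s = Suc n}"
  have "D > 0"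
    using assms(1,2) by (simp add: D_def add_pos_nonneg)
  have "L = L' \<union> E" "L' \<inter> E = {}"
    unfolding L_def L'_def E_def by auto
  then have split: "measure_pmf.prob \<pi> L = measure_pmf.prob \<pi> L' + measure_pmf.prob \<pi> E"
    by (simp add: measure_pmf.finite_measure_Union)
  have "measure_pmf.prob \<pi> L \<le> measure_pmf.expectation \<pi>
      (\<lambda>s. indicator L' s + mu * real (1 + t * r) / D * indicator E s
         + mu * real (t + 1) / D * indicator E' s)"
    using prob_full_step_length[OF assms(1,2) stationary_nested[OF assms]]
    unfolding L_def L'_def E_def E'_def D_def
    by (intro stationary_prob_le[OF stat] integrable_add integrable_mult_right
        integrable_real_indicator) (simp_all add: measure_pmf.emeasure_eq_measure)
  also have "\<dots> = measure_pmf.prob \<pi> L' + mu * real (1 + t * r) / D * measure_pmf.prob \<pi> E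
      + mu * real (t + 1) / D * measure_pmf.prob \<pi> E'"
    by (subst Bochner_Integration.integral_add Bochner_Integration.integral_add)+
      (auto simp: integrable_indicator_iff measure_pmf.emeasure_eq_measure)
  finally have "(1 - mu * real (1 + t * r) / D) * measure_pmf.prob \<pi> E
      \<le> mu * real (t + 1) / D * measure_pmf.prob \<pi> E'"
    unfolding split by (simp add: algebra_simps)
  moreover have "1 - mu * real (1 + t * r) / D = lam / D"
    using \<open>D > 0\<close> by (simp add: D_def field_simps)
  ultimately show ?thesis
    using \<open>D > 0\<close> by (simp add: E_def E'_def divide_le_cancel field_simps)
qed

section \<open>The tagged request and a comparison walk\<close>

fun walk_survival :: "real \<Rightarrow> nat \<Rightarrow> nat \<Rightarrow> real" where
  "walk_survival q 0 m = (if m = 0 then 0 else 1)"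
| "walk_survival q (Suc k) m =
     (if m = 0 then 0 else q * walk_survival q k (m - 1) + (1 - q) * walk_survival q k m)"

lemma walk_survival_0 [simp]: "walk_survival q k 0 = 0"
  by (cases k) simp_all

lemma walk_survival_bounds:
  assumes "0 \<le> q" "q \<le> 1"
  shows "0 \<le> walk_survival q k m \<and> walk_survival q k m \<le> 1"
proof (induction k arbitrary: m)
  case 0
  then show ?case by simp
next
  case (Suc k)
  then have "q * walk_survival q k (m - 1) + (1 - q) * walk_survival q k m \<le> q * 1 + (1 - q) * 1"
    using assms by (intro add_mono mult_left_mono) auto
  then show ?case
    using Suc assms by simp
qed

lemma walk_survival_mono_Suc:
  assumes "0 \<le> q" "q \<le> 1"
  shows "walk_survival q k m \<le> walk_survival q k (Suc m)"
proof (induction k arbitrary: m)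
  case 0
  then show ?case by simp
next
  case (Suc k)
  show ?case
  proof (cases m)
    case 0
    then show ?thesis
      using walk_survival_bounds[OF assms, of "Suc k" "Suc 0"] by simp
  next
    case (Suc m')
    have "q * walk_survival q k m' + (1 - q) * walk_survival q k m
        \<le> q * walk_survival q k m + (1 - q) * walk_survival q k (Suc m)"
      using Suc.IH[of m'] Suc.IH[of m] Suc assms by (intro add_mono mult_left_mono) auto
    then show ?thesis
      using Suc by simp
  qed
qed

lemma walk_survival_mono:
  "0 \<le> q \<Longrightarrow> q \<le> 1 \<Longrightarrow> m \<le> m' \<Longrightarrow> walk_survival q k m \<le> walk_survival q k m'"
  using lift_Suc_mono_le[of "walk_survival q k", OF walk_survival_mono_Suc] by blast

lemma tag_iter_Suc: "tag_iter t r (Suc k) s = bind_pmf (tag_kernel t r s) (tag_iter t r k)"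
proof (induction k arbitrary: s)
  case 0
  show ?case
    unfolding tag_iter_def by (simp add: bind_return_pmf bind_return_pmf')
next
  case (Suc k)
  have "tag_iter t r (Suc (Suc k)) s = bind_pmf (tag_iter t r (Suc k) s) (tag_kernel t r)"
    unfolding tag_iter_def by simp
  also have "\<dots> = bind_pmf (tag_kernel t r s) (\<lambda>s'. bind_pmf (tag_iter t r k s') (tag_kernel t r))"
    by (simp only: Suc.IH bind_assoc_pmf)
  also have "\<dots> = bind_pmf (tag_kernel t r s) (tag_iter t r (Suc k))"
    unfolding tag_iter_def by simp
  finally show ?case .
qed

definition tag_alive :: "nat \<Rightarrow> nat \<Rightarrow> nat \<Rightarrow> state option \<Rightarrow> real" where
  "tag_alive t r k s = measure_pmf.prob (tag_iter t r k s) (range Some)"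

lemma tag_alive_Suc:
  "tag_alive t r (Suc k) s
    = (\<Sum>v\<in>servers t r. tag_alive t r k (tag_step r v s)) / real (card (servers t r))"
  unfolding tag_alive_def tag_iter_Suc prob_bind_pmf tag_kernel_def
  by (simp add: integral_pmf_of_set[OF servers_not_empty finite_servers])

lemma average_two_valued_ge:
  fixes a b :: real
  assumes "finite S" "S \<noteq> {}" "D \<subseteq> S" "card D \<le> d" "a \<le> b"
  shows "real d / real (card S) * a + (1 - real d / real (card S)) * b
    \<le> (\<Sum>v\<in>S. if v \<in> D then a else b) / real (card S)"
proof -
  have "card D \<le> card S"
    using assms(1,3) by (rule card_mono)
  have "(\<Sum>v\<in>S. if v \<in> D then a else b) = real (card D) * a + real (card S - card D) * b"
    using assms(1,3)
    by (simp add: sum.If_cases Int_absorb1 Diff_eq[symmetric] card_Diff_subset finite_subset)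
  also have "\<dots> = real (card S) * b - real (card D) * (b - a)"
    using \<open>card D \<le> card S\<close> by (simp add: of_nat_diff algebra_simps)
  also have "\<dots> \<ge> real (card S) * b - real d * (b - a)"
    using assms(4,5) by (intro diff_left_mono mult_right_mono) auto
  finally have "real (card S) * b - real d * (b - a) \<le> (\<Sum>v\<in>S. if v \<in> D then a else b)" .
  moreover have "real (card S) > 0"
    using assms(1,2) by (simp add: card_gt_0_iff)
  moreover have "real d / real (card S) * a + (1 - real d / real (card S)) * b
      = (real (card S) * b - real d * (b - a)) / real (card S)"
    using \<open>real (card S) > 0\<close> by (simp add: field_simps)
  ultimately show ?thesis
    by (simp add: divide_right_mono)
qed

lemma departure_fraction_bounds:
  assumes "r \<ge> 1"
  shows "0 \<le> real (t + 1) / real (1 + t * r)" "real (t + 1) / real (1 + t * r) \<le> 1"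
proof -
  have "t + 1 \<le> 1 + t * r"
    using mult_le_mono2[OF assms, of t] by simp
  then have "real (t + 1) \<le> real (1 + t * r)"
    by (simp only: of_nat_le_iff)
  moreover have "real (1 + t * r) > 0"
    by (simp only: of_nat_0_less_iff)
  ultimately show "real (t + 1) / real (1 + t * r) \<le> 1"
    by (simp only: divide_le_eq_1_pos)
  show "0 \<le> real (t + 1) / real (1 + t * r)"
    by simp
qed

lemma walk_survival_le_tag_alive_tag_step:
  assumes "nested xs" "xs \<in> valid_states t r" "xs \<noteq> []" "v \<in> servers t r"
    and IH: "\<And>ys. nested ys \<Longrightarrow> ys \<in> valid_states t r \<Longrightarrow> ys \<noteq> []
      \<Longrightarrow> walk_survival q k (length ys) \<le> tag_alive t r k (Some ys)"
  shows "walk_survival q k (length (serve r v xs)) \<le> tag_alive t r k (tag_step r v (Some xs))"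
proof (cases "serve r v xs = []")
  case True
  then show ?thesis
    by (simp add: tag_alive_def)
next
  case False
  then show ?thesis
    using IH[OF nested_serve[OF assms(1)] valid_states_serve[OF assms(4,2)]]
      tag_step_nested[OF assms(1,2,4,3)]
    by simp
qed

lemma walk_survival_le_tag_alive_Suc:
  assumes q_def: "q = real (t + 1) / real (1 + t * r)"
    and "r \<ge> 1" "nested xs" "xs \<in> valid_states t r" "xs \<noteq> []"
    and IH: "\<And>ys. nested ys \<Longrightarrow> ys \<in> valid_states t r \<Longrightarrow> ys \<noteq> []
      \<Longrightarrow> walk_survival q k (length ys) \<le> tag_alive t r k (Some ys)"
  shows "walk_survival q (Suc k) (length xs) \<le> tag_alive t r (Suc k) (Some xs)"
proof -
  define D where "D = {v \<in> servers t r. departs r v xs \<noteq> None}"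
  define a where "a = walk_survival q k (length xs - 1)"
  define b where "b = walk_survival q k (length xs)"
  have "D \<subseteq> servers t r"
    unfolding D_def by auto
  moreover have "card D \<le> t + 1"
    unfolding D_def by (rule card_departing_servers_le[OF assms(3)])
  moreover have "a \<le> b"
    unfolding a_def b_def q_def using departure_fraction_bounds[OF assms(2)]
    by (intro walk_survival_mono) simp_all
  ultimately have "walk_survival q (Suc k) (length xs)
      \<le> (\<Sum>v\<in>servers t r. if v \<in> D then a else b) / real (card (servers t r))"
    using average_two_valued_ge[OF finite_servers servers_not_empty,
        where D=D and d="t + 1" and a=a and b=b] assms(5)
    by (simp add: a_def b_def q_def card_servers del: of_nat_add of_nat_mult)
  also have "\<dots> \<le> tag_alive t r (Suc k) (Some xs)"
    unfolding tag_alive_Suc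
  proof (intro divide_right_mono sum_mono)
    fix v assume "v \<in> servers t r"
    then have "(if v \<in> D then a else b) = walk_survival q k (length (serve r v xs))"
      by (simp add: a_def b_def D_def length_serve)
    then show "(if v \<in> D then a else b) \<le> tag_alive t r k (tag_step r v (Some xs))"
      using walk_survival_le_tag_alive_tag_step[OF assms(3-5) \<open>v \<in> servers t r\<close> IH] by simp
  qed simp
  finally show ?thesis .
qed

lemma walk_survival_le_tag_alive:
  assumes "r \<ge> 1"
  shows "nested xs \<Longrightarrow> xs \<in> valid_states t r \<Longrightarrow> xs \<noteq> []
    \<Longrightarrow> walk_survival (real (t + 1) / real (1 + t * r)) k (length xs) \<le> tag_alive t r k (Some xs)"
proof (induction k arbitrary: xs)
  case 0
  then show ?case
    unfolding tag_alive_def tag_iter_def by simp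
next
  case (Suc k)
  then show ?case
    using walk_survival_le_tag_alive_Suc[OF refl assms] by blast
qed

section \<open>Averaging over the stationary queue length\<close>

lemma pmf_times_sums_expectation:
  fixes P :: "nat pmf" and f :: "nat \<Rightarrow> real"
  assumes "\<And>n. \<bar>f n\<bar> \<le> B"
  shows "(\<lambda>n. pmf P n * f n) sums measure_pmf.expectation P f"
proof -
  have "integrable (measure_pmf P) f"
    using assms by (intro measure_pmf.integrable_const_bound[where B=B]) auto
  then have "integrable (density (count_space UNIV) (pmf P)) f"
    by (simp add: measure_pmf_eq_density)
  then have "integrable (count_space UNIV) (\<lambda>n. pmf P n *\<^sub>R f n)"
    by (subst (asm) integrable_density) auto
  then have "(\<lambda>n. pmf P n *\<^sub>R f n) sums integral\<^sup>L (count_space UNIV) (\<lambda>n. pmf P n *\<^sub>R f n)"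
    by (rule sums_integral_count_space_nat)
  then show ?thesis
    by (simp add: measure_pmf_eq_density integral_density)
qed

lemma expectation_Suc_le_of_pmf_ratio:
  fixes P :: "nat pmf" and h :: "nat \<Rightarrow> real"
  assumes "\<And>n. \<bar>h n\<bar> \<le> B" "h 0 = 0" "\<And>n. 0 \<le> h n"
    and "0 \<le> \<rho>" "\<And>n. \<rho> * pmf P n \<le> pmf P (Suc n)"
  shows "\<rho> * measure_pmf.expectation P (\<lambda>n. h (Suc n)) \<le> measure_pmf.expectation P h"
proof (rule sums_le)
  show "(\<lambda>n. \<rho> * (pmf P n * h (Suc n))) sums (\<rho> * measure_pmf.expectation P (\<lambda>n. h (Suc n)))"
    using assms(1) by (intro sums_mult pmf_times_sums_expectation) auto
  show "(\<lambda>n. pmf P (Suc n) * h (Suc n)) sums measure_pmf.expectation P h"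
    using pmf_times_sums_expectation[OF assms(1), of P] sums_Suc_iff[of "\<lambda>n. pmf P n * h n"]
      assms(2)
    by simp
  show "\<rho> * (pmf P n * h (Suc n)) \<le> pmf P (Suc n) * h (Suc n)" for n
    using assms(3,5) by (simp add: mult.assoc[symmetric] mult_right_mono)
qed

lemma expectation_walk_survival_ge_power:
  fixes P :: "nat pmf"
  assumes q: "0 \<le> q" "q \<le> 1" and "0 \<le> \<rho>" "\<And>n. \<rho> * pmf P n \<le> pmf P (Suc n)"
  shows "(1 - q * (1 - \<rho>)) ^ k \<le> measure_pmf.expectation P (\<lambda>n. walk_survival q k (Suc n))"
proof (induction k)
  case 0
  then show ?case by simp
next
  case (Suc k)
  define G where "G = measure_pmf.expectation P (\<lambda>n. walk_survival q k (Suc n))"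
  have bounded: "\<bar>walk_survival q k m\<bar> \<le> 1" for m
    using walk_survival_bounds[OF q, of k m] by simp
  have "integrable (measure_pmf P) (walk_survival q k)"
    "integrable (measure_pmf P) (\<lambda>n. walk_survival q k (Suc n))"
    using bounded by (auto intro: measure_pmf.integrable_const_bound[where B=1])
  then have step: "measure_pmf.expectation P (\<lambda>n. walk_survival q (Suc k) (Suc n))
      = q * measure_pmf.expectation P (walk_survival q k) + (1 - q) * G"
    unfolding G_def by (simp add: Bochner_Integration.integral_add)
  have shift: "\<rho> * G \<le> measure_pmf.expectation P (walk_survival q k)"
    unfolding G_def using walk_survival_bounds[OF q] assms(3,4)
    by (intro expectation_Suc_le_of_pmf_ratio[OF bounded]) auto
  have "q * (1 - \<rho>) \<le> q"
    using mult_nonneg_nonneg[OF q(1) assms(3)] by (simp add: algebra_simps)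
  then have "(1 - q * (1 - \<rho>)) ^ Suc k \<le> (1 - q * (1 - \<rho>)) * G"
    using Suc.IH q unfolding G_def by (simp add: mult_left_mono)
  also have "\<dots> = q * (\<rho> * G) + (1 - q) * G"
    by (simp add: algebra_simps)
  also have "\<dots> \<le> measure_pmf.expectation P (\<lambda>n. walk_survival q (Suc k) (Suc n))"
    unfolding step using shift q by (simp add: mult_left_mono)
  finally show ?case .
qed

lemma stationary_walk_survival_ge_power:
  assumes "lam > 0" "mu > 0" "stationary lam mu t r \<pi>" "0 \<le> q" "q \<le> 1"
  defines "\<rho> \<equiv> lam / (mu * real (t + 1))"
  shows "(1 - q * (1 - \<rho>)) ^ k
    \<le> measure_pmf.expectation \<pi> (\<lambda>xs. walk_survival q k (Suc (length xs)))"
proof -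
  have "mu * real (t + 1) > 0"
    using assms(2) by simp
  then have "\<rho> * pmf (map_pmf length \<pi>) n \<le> pmf (map_pmf length \<pi>) (Suc n)" for n
    using stationary_length_balance[OF assms(1-3), of n]
    by (simp add: \<rho>_def pmf_map vimage_def field_simps)
  then show ?thesis
    using expectation_walk_survival_ge_power[OF assms(4,5), of \<rho> "map_pmf length \<pi>" k] assms(1,2)
    by (simp add: \<rho>_def)
qed

section \<open>The Poisson mixture\<close>

definition poisson_weight :: "real \<Rightarrow> nat \<Rightarrow> real" where
  "poisson_weight a k = exp (- a) * a ^ k / fact k"

lemma poisson_weight_nonneg: "0 \<le> a \<Longrightarrow> 0 \<le> poisson_weight a k"
  unfolding poisson_weight_def by simp

lemma poisson_weight_power_sums:
  "(\<lambda>k. poisson_weight a k * c ^ k) sums exp (- (a * (1 - c)))"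
proof -
  have "(\<lambda>k. exp (- a) * ((a * c) ^ k /\<^sub>R fact k)) sums (exp (- a) * exp (a * c))"
    by (intro sums_mult exp_converges)
  moreover have "exp (- a) * exp (a * c) = exp (- (a * (1 - c)))"
    by (simp add: mult_exp_exp algebra_simps)
  ultimately show ?thesis
    by (simp add: poisson_weight_def power_mult_distrib divide_inverse mult_ac)
qed

lemma summable_poisson_weight_mult:
  assumes "0 \<le> a" "\<And>k. 0 \<le> f k" "\<And>k. f k \<le> 1"
  shows "summable (\<lambda>k. poisson_weight a k * f k)"
proof (rule summable_comparison_test')
  show "summable (poisson_weight a)"
    using sums_summable[OF poisson_weight_power_sums[of a 1]] by simp
  show "norm (poisson_weight a k * f k) \<le> poisson_weight a k" for k
    using assms poisson_weight_nonneg[OF assms(1), of k] by (simp add: abs_mult mult_left_le)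
qed

lemma tag_survival_eq:
  "tag_survival mu t r xs x
    = (\<Sum>k. poisson_weight (mu * real (1 + t * r) * x) k * tag_alive t r k (Some (xs @ [{}])))"
  unfolding tag_survival_def tag_alive_def poisson_weight_def Let_def by simp

lemma tag_survival_bounds:
  assumes "0 \<le> mu" "0 \<le> x"
  shows "0 \<le> tag_survival mu t r xs x \<and> tag_survival mu t r xs x \<le> 1"
proof -
  define a where "a = mu * real (1 + t * r) * x"
  have "0 \<le> a"
    using assms by (simp add: a_def)
  have alive: "0 \<le> tag_alive t r k s" "tag_alive t r k s \<le> 1" for k s
    by (simp_all add: tag_alive_def)
  have "(\<Sum>k. poisson_weight a k * tag_alive t r k (Some (xs @ [{}]))) \<le> (\<Sum>k. poisson_weight a k)"
    using summable_poisson_weight_mult[OF \<open>0 \<le> a\<close> alive]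
      sums_summable[OF poisson_weight_power_sums[of a 1]] poisson_weight_nonneg[OF \<open>0 \<le> a\<close>] alive
    by (intro suminf_le) (auto simp: mult_left_le)
  also have "\<dots> = 1"
    using sums_unique[OF poisson_weight_power_sums[of a 1]] by simp
  finally show ?thesis
    using summable_poisson_weight_mult[OF \<open>0 \<le> a\<close> alive] poisson_weight_nonneg[OF \<open>0 \<le> a\<close>] alive
    unfolding tag_survival_eq a_def[symmetric] by (auto intro: suminf_nonneg)
qed

lemma tag_survival_ge_partial_sum:
  assumes "0 \<le> mu" "0 \<le> x" "\<And>k. g k \<le> tag_alive t r k (Some (xs @ [{}]))"
  shows "(\<Sum>k<K. poisson_weight (mu * real (1 + t * r) * x) k * g k) \<le> tag_survival mu t r xs x"
proof -
  define a where "a = mu * real (1 + t * r) * x"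
  have "0 \<le> a"
    using assms by (simp add: a_def)
  have alive: "0 \<le> tag_alive t r k s" "tag_alive t r k s \<le> 1" for k s
    by (simp_all add: tag_alive_def)
  have "(\<Sum>k<K. poisson_weight a k * g k)
      \<le> (\<Sum>k<K. poisson_weight a k * tag_alive t r k (Some (xs @ [{}])))"
    using assms(3) poisson_weight_nonneg[OF \<open>0 \<le> a\<close>] by (intro sum_mono mult_left_mono) auto
  also have "\<dots> \<le> (\<Sum>k. poisson_weight a k * tag_alive t r k (Some (xs @ [{}])))"
    using summable_poisson_weight_mult[OF \<open>0 \<le> a\<close> alive] poisson_weight_nonneg[OF \<open>0 \<le> a\<close>] alive
    by (intro sum_le_suminf) auto
  finally show ?thesis
    unfolding tag_survival_eq a_def .
qed

lemma tag_survival_ge_walk_partial_sum: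
  assumes "r \<ge> 1" "0 \<le> mu" "0 \<le> x" "nested xs" "xs \<in> valid_states t r"
  defines "q \<equiv> real (t + 1) / real (1 + t * r)"
  shows "(\<Sum>k<K. poisson_weight (mu * real (1 + t * r) * x) k * walk_survival q k (Suc (length xs)))
    \<le> tag_survival mu t r xs x"
proof (rule tag_survival_ge_partial_sum[OF assms(2,3)])
  show "walk_survival q k (Suc (length xs)) \<le> tag_alive t r k (Some (xs @ [{}]))" for k
    using walk_survival_le_tag_alive[OF assms(1) nested_snoc_empty[OF assms(4)]
        valid_states_snoc_empty[OF assms(1,5)]]
    by (simp add: q_def)
qed

lemma download_tail_ge_walk_partial_sum:
  assumes "lam > 0" "mu > 0" "r \<ge> 1" "x \<ge> 0"
    and "set_pmf \<pi> \<subseteq> valid_states t r" "stationary lam mu t r \<pi>"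
  defines "q \<equiv> real (t + 1) / real (1 + t * r)"
  shows "(\<Sum>k<K. poisson_weight (mu * real (1 + t * r) * x) k
            * measure_pmf.expectation \<pi> (\<lambda>xs. walk_survival q k (Suc (length xs))))
    \<le> download_tail mu t r \<pi> x"
proof -
  define a where "a = mu * real (1 + t * r) * x"
  have "0 \<le> q" "q \<le> 1"
    unfolding q_def using departure_fraction_bounds[OF assms(3)] .
  have "(\<Sum>k<K. poisson_weight a k
          * measure_pmf.expectation \<pi> (\<lambda>xs. walk_survival q k (Suc (length xs))))
      = measure_pmf.expectation \<pi>
          (\<lambda>xs. \<Sum>k<K. poisson_weight a k * walk_survival q k (Suc (length xs)))"
    using walk_survival_bounds[OF \<open>0 \<le> q\<close> \<open>q \<le> 1\<close>]
    by (subst Bochner_Integration.integral_sum)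
      (auto intro!: measure_pmf.integrable_const_bound[where B=1])
  also have "\<dots> \<le> measure_pmf.expectation \<pi> (\<lambda>xs. tag_survival mu t r xs x)"
  proof (rule integral_mono_AE)
    show "integrable (measure_pmf \<pi>) (\<lambda>xs. tag_survival mu t r xs x)"
      using tag_survival_bounds[of mu x] assms(2,4)
      by (intro measure_pmf.integrable_const_bound[where B=1]) auto
    show "integrable (measure_pmf \<pi>)
        (\<lambda>xs. \<Sum>k<K. poisson_weight a k * walk_survival q k (Suc (length xs)))"
      using walk_survival_bounds[OF \<open>0 \<le> q\<close> \<open>q \<le> 1\<close>]
      by (intro Bochner_Integration.integrable_sum integrable_mult_right)
        (auto intro: measure_pmf.integrable_const_bound[where B=1])
    show "AE xs in measure_pmf \<pi>. (\<Sum>k<K. poisson_weight a k * walk_survival q k (Suc (length xs)))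
        \<le> tag_survival mu t r xs x"
      using tag_survival_ge_walk_partial_sum[OF assms(3) _ assms(4)]
        stationary_nested[OF assms(1,2,6)] assms(2,5)
      by (intro AE_pmfI) (auto simp: a_def q_def)
  qed
  finally show ?thesis
    unfolding download_tail_def a_def .
qed

lemma download_tail_ge_power_partial_sum:
  assumes "lam > 0" "mu > 0" "r \<ge> 1" "x \<ge> 0"
    and "set_pmf \<pi> \<subseteq> valid_states t r" "stationary lam mu t r \<pi>"
  defines "q \<equiv> real (t + 1) / real (1 + t * r)" and "\<rho> \<equiv> lam / (mu * real (t + 1))"
  shows "(\<Sum>k<K. poisson_weight (mu * real (1 + t * r) * x) k * (1 - q * (1 - \<rho>)) ^ k)
    \<le> download_tail mu t r \<pi> x"
proof -
  define a where "a = mu * real (1 + t * r) * x"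
  have q: "0 \<le> q" "q \<le> 1"
    unfolding q_def using departure_fraction_bounds[OF assms(3)] .
  have "(\<Sum>k<K. poisson_weight a k * (1 - q * (1 - \<rho>)) ^ k)
      \<le> (\<Sum>k<K. poisson_weight a k
            * measure_pmf.expectation \<pi> (\<lambda>xs. walk_survival q k (Suc (length xs))))"
    using stationary_walk_survival_ge_power[OF assms(1,2,6) q] poisson_weight_nonneg[of a]
      assms(2,4)
    by (intro sum_mono mult_left_mono) (simp_all add: a_def \<rho>_def)
  also have "\<dots> \<le> download_tail mu t r \<pi> x"
    using download_tail_ge_walk_partial_sum[OF assms(1-6)] unfolding a_def q_def .
  finally show ?thesis
    unfolding a_def .
qed

theorem lemma6:
  fixes lam mu x :: real and t r :: nat and \<pi> :: "state pmf"
  assumes "lam > 0" and "mu > 0" and "t \<ge> 1" and "r \<ge> 1"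
    and "lam < (real t + 1) * mu"
    and "set_pmf \<pi> \<subseteq> valid_states t r"
    and "stationary lam mu t r \<pi>"
    and "x \<ge> 0"
  shows "download_tail mu t r \<pi> x \<ge> exp (- (((real t + 1) * mu - lam) * x))"
proof -
  define q where "q = real (t + 1) / real (1 + t * r)"
  define \<rho> where "\<rho> = lam / (mu * real (t + 1))"
  define a where "a = mu * real (1 + t * r) * x"
  have "(\<Sum>k<K. poisson_weight a k * (1 - q * (1 - \<rho>)) ^ k) \<le> download_tail mu t r \<pi> x" for K
    using download_tail_ge_power_partial_sum[OF assms(1,2,4,8,6,7)]
    unfolding a_def q_def \<rho>_def .
  moreover have "a * (q * (1 - \<rho>)) = ((real t + 1) * mu - lam) * x"
  proof -
    have "a * (q * (1 - \<rho>)) = mu * real (1 + t * r) * q * (1 - \<rho>) * x"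
      by (simp add: a_def algebra_simps)
    also have "mu * real (1 + t * r) * q = mu * real (t + 1)"
      unfolding q_def by (simp del: of_nat_Suc of_nat_add of_nat_mult)
    also have "mu * real (t + 1) * (1 - \<rho>) = (real t + 1) * mu - lam"
      using mult_pos_pos[OF assms(2), of "real (t + 1)"] by (simp add: \<rho>_def field_simps)
    finally show ?thesis .
  qed
  ultimately show ?thesis
    using poisson_weight_power_sums[of a "1 - q * (1 - \<rho>)"]
    by (intro LIMSEQ_le_const2[of "\<lambda>K. \<Sum>k<K. poisson_weight a k * _ ^ k"]) (auto simp: sums_def)
qed

end
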